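(* Let $A$ be an infinite set of positive integers with $1\in A$. Then $\mathrm{Single}(n,A)$ and $\mathrm{Total}(n,A)$ are finite for all $n\ge1$ (and hence, for every $n$, every play of $\mathrm{AGG}(n,A)$ ends after finitely many steps) if and only if the differences between consecutive elements of $A$ (listed in increasing order) are unbounded.
   Context: For an integer $n\ge 0$ and a set $A$ of positive integers with $1\in A$, the abstract generalized 2048 game $\mathrm{AGG}(n,A)$ is played on $n$ indistinguishable cells. A position assigns to each cell either nothing (the cell is empty) or a tile carrying a value in $A$. The initial position has all cells empty. A step, which can be performed from any position having at least one empty cell, consists of: (i) placing a new tile of value $1$ into a chosen empty cell; then (ii) optionally choosing any collection of pairwise disjoint sets of nonempty cells such that the sum of the tile values in each chosen set belongs to $A$, and merging each chosen set into a single tile, whose value is that sum, placed in one cell of the set, the other cells of the set becoming empty. The game ends when, after a step, all cells are nonempty (no further step is then possible). A position is reachable if it can be obtained from the initial position by a finite sequence of steps; its total value is the sum of its tile values. For $n\ge1$, $\mathrm{Single}(n,A)$ is the supremum (possibly $\infty$) of the values $x\in A$ such that the position of $\mathrm{AGG}(n,A)$ with one tile of value $x$ and $n-1$ empty cells is reachable, and $\mathrm{Total}(n,A)$ is the supremum (possibly $\infty$) of the total values of reachable positions of $\mathrm{AGG}(n,A)$. *)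

theory Defs
  imports Main "HOL-Library.Multiset" "HOL-Library.Extended_Nat" "HOL-Library.Infinite_Set"
begin

text \<open>Since the n cells are indistinguishable, a position is the multiset of
values of the tiles on the nonempty cells; its size (number of nonempty cells)
is at most n.\<close>

definition merge_step :: "nat set \<Rightarrow> nat multiset \<Rightarrow> nat multiset \<Rightarrow> bool" where
  "merge_step A M M' \<longleftrightarrow>
     (\<exists>Ps R. M = sum_list Ps + R \<and>
             (\<forall>P \<in> set Ps. P \<noteq> {#} \<and> sum_mset P \<in> A) \<and>
             M' = R + mset (map sum_mset Ps))"

definition agg_step :: "nat \<Rightarrow> nat set \<Rightarrow> nat multiset \<Rightarrow> nat multiset \<Rightarrow> bool" where
  "agg_step n A M M' \<longleftrightarrow> size M < n \<and> merge_step A (M + {#1#}) M'"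

inductive agg_reachable :: "nat \<Rightarrow> nat set \<Rightarrow> nat multiset \<Rightarrow> bool"
  for n :: nat and A :: "nat set" where
  init: "agg_reachable n A {#}"
| step: "agg_reachable n A M \<Longrightarrow> agg_step n A M M' \<Longrightarrow> agg_reachable n A M'"

definition Single :: "nat \<Rightarrow> nat set \<Rightarrow> enat" where
  "Single n A = Sup (enat ` {x \<in> A. agg_reachable n A {#x#}})"

definition Total :: "nat \<Rightarrow> nat set \<Rightarrow> enat" where
  "Total n A = Sup ((\<lambda>M. enat (sum_mset M)) ` {M. agg_reachable n A M})"

end

theory Submission
  imports Defs
begin

text \<open>If consecutive elements of A differ by at most B, then with B + 1 cells a single tile
can climb through all of A: next to a tile a, place d - 1 ones and merge them, together with
the newly placed tile 1, into a + d. Conversely, let the gaps be unbounded and suppose that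
every position of the n-cell game has total value at most T. In the (n+1)-cell game, follow
one distinguished tile: the remaining tiles evolve as in the n-cell game (once we allow
discarding tiles), so in one step the distinguished tile absorbs a value of at most T + 1.
If it starts below a gap of A of length greater than T + 1, it can never cross that gap,
and the totals of the (n+1)-cell game stay below the bottom of the gap plus T.\<close>

lemma subset_mset_add_mset_cases:
  assumes "M \<subseteq># add_mset x N"
  obtains "M = {#}"
    | y M' where "M = add_mset y M'" "M' \<subseteq># N" "y = x \<or> y \<in># N"
proof (cases "x \<in># M")
  case True
  then obtain M' where "M = add_mset x M'" by (metis multi_member_split)
  moreover from assms this have "M' \<subseteq># N" by simp
  ultimately show thesis by (rule that(2)) simp
next
  case False
  have "M - {#x#} \<subseteq># N" using assms by (simp add: subset_eq_diff_conv)
  with False have "M \<subseteq># N" by (simp add: diff_single_trivial)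
  show thesis
  proof (cases "M = {#}")
    case False
    then obtain y M' where "M = add_mset y M'" by (metis multiset_cases)
    with \<open>M \<subseteq># N\<close> have "M' \<subseteq># N" "y \<in># N"
      by (auto dest: mset_subset_eq_insertD)
    with \<open>M = add_mset y M'\<close> show thesis using that(2) by blast
  qed (rule that(1))
qed

lemma merge_step_empty: "merge_step A {#} M \<Longrightarrow> M = {#}"
proof -
  assume "merge_step A {#} M"
  then obtain Ps R where split: "{#} = sum_list Ps + R" "\<forall>P \<in> set Ps. P \<noteq> {#}"
    and M: "M = R + mset (map sum_mset Ps)"
    unfolding merge_step_def by blast
  from split have "Ps = []" by (cases Ps) simp_all
  with split M show "M = {#}" by simp
qed

text \<open>The fate of one distinguished tile x in a merge: it absorbs a group G of other tiles
(G = {#} if it is not merged), and the other tiles could equally have been merged leaving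
G untouched.\<close>
lemma merge_step_add_mset:
  assumes "merge_step A (add_mset x N) M"
  obtains G N' where "M = add_mset (x + sum_mset G) N'" "merge_step A N (N' + G)"
    "G \<subseteq># N" "G = {#} \<or> x + sum_mset G \<in> A"
proof -
  from assms obtain Ps R where
    split: "add_mset x N = sum_list Ps + R" and
    groups: "\<forall>P \<in> set Ps. P \<noteq> {#} \<and> sum_mset P \<in> A" and
    M: "M = R + mset (map sum_mset Ps)"
    unfolding merge_step_def by blast
  have "x \<in># sum_list Ps + R" by (simp flip: split)
  then consider "x \<in># R" | P where "P \<in> set Ps" "x \<in># P" by auto
  then show thesis
  proof cases
    case 1
    then obtain R' where "R = add_mset x R'" by (metis multi_member_split)
    with split M have "N = sum_list Ps + R'" "M = add_mset x (R' + mset (map sum_mset Ps))"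
      by auto
    with groups show thesis
      using that[of "{#}"] unfolding merge_step_def by auto
  next
    case 2
    obtain Ps1 Ps2 where Ps: "Ps = Ps1 @ P # Ps2" using \<open>P \<in> set Ps\<close> by (metis split_list)
    obtain G where P: "P = add_mset x G" using \<open>x \<in># P\<close> by (metis multi_member_split)
    let ?Qs = "Ps1 @ Ps2"
    have N: "N = sum_list ?Qs + (R + G)" using split Ps P by (simp add: ac_simps)
    have "merge_step A N ((R + mset (map sum_mset ?Qs)) + G)"
      unfolding merge_step_def using groups Ps N by (auto intro!: exI[of _ ?Qs] simp: ac_simps)
    moreover have "M = add_mset (x + sum_mset G) (R + mset (map sum_mset ?Qs))"
      using M Ps P by (simp add: ac_simps)
    moreover have "x + sum_mset G \<in> A" using groups Ps P by auto
    moreover have "G \<subseteq># N" using N by simp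
    ultimately show thesis using that by blast
  qed
qed

text \<open>Allowing tiles to be discarded is what lets the tiles other than a distinguished one
behave like positions of the game with one cell fewer.\<close>
inductive sub_reachable :: "nat \<Rightarrow> nat set \<Rightarrow> nat multiset \<Rightarrow> bool" for n A where
  init: "sub_reachable n A {#}"
| step: "sub_reachable n A M \<Longrightarrow> agg_step n A M M' \<Longrightarrow> sub_reachable n A M'"
| subset: "sub_reachable n A M \<Longrightarrow> M' \<subseteq># M \<Longrightarrow> sub_reachable n A M'"

lemma agg_reachable_imp_sub_reachable: "agg_reachable n A M \<Longrightarrow> sub_reachable n A M"
  by (induction rule: agg_reachable.induct) (auto intro: sub_reachable.intros)

lemma sub_reachable_0: "sub_reachable 0 A M \<Longrightarrow> M = {#}"
  by (induction rule: sub_reachable.induct) (auto simp: agg_step_def)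

lemma sub_reachable_Suc_cases:
  assumes "sub_reachable (Suc n) A M"
    and bound: "\<And>M. sub_reachable n A M \<Longrightarrow> sum_mset M \<le> T"
    and "T + 1 \<le> c"
    and gap: "\<And>y. y \<in> A \<Longrightarrow> y \<le> c + (T + 1) \<Longrightarrow> y \<le> c"
  shows "M = {#} \<or> (\<exists>x R. M = add_mset x R \<and> sub_reachable n A R \<and> x \<le> c)"
  using assms(1)
proof (induction rule: sub_reachable.induct)
  case init
  then show ?case by simp
next
  case (step M M')
  from step.IH consider "M = {#}" | x R where "M = add_mset x R" "sub_reachable n A R" "x \<le> c"
    by blast
  then show ?case
  proof cases
    case 1
    with step.hyps(2) have "merge_step A (add_mset 1 {#}) M'" by (simp add: agg_step_def)
    then obtain G N' where "M' = add_mset (1 + sum_mset G) N'" "merge_step A {#} (N' + G)"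
      by (rule merge_step_add_mset)
    from this(2) have "N' + G = {#}" by (rule merge_step_empty)
    with \<open>M' = add_mset (1 + sum_mset G) N'\<close> have "M' = {#1#}" by simp
    with \<open>T + 1 \<le> c\<close> show ?thesis by (auto intro: sub_reachable.init)
  next
    case 2
    with step.hyps(2) have "size R < n" "merge_step A (add_mset x (R + {#1#})) M'"
      by (simp_all add: agg_step_def add_mset_commute)
    from this(2) obtain G N' where M': "M' = add_mset (x + sum_mset G) N'"
      and "merge_step A (R + {#1#}) (N' + G)" "G \<subseteq># R + {#1#}"
      and G: "G = {#} \<or> x + sum_mset G \<in> A"
      by (rule merge_step_add_mset)
    with \<open>size R < n\<close> have "agg_step n A R (N' + G)" by (simp add: agg_step_def)
    with \<open>sub_reachable n A R\<close> have "sub_reachable n A (N' + G)"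
      by (rule sub_reachable.step)
    then have "sub_reachable n A N'" by (rule sub_reachable.subset) simp
    moreover have "x + sum_mset G \<le> c"
    proof -
      have "sum_mset G \<le> sum_mset (R + {#1#})"
        using \<open>G \<subseteq># R + {#1#}\<close> by (metis le_add1 subset_mset.le_iff_add sum_mset.union)
      then have "x + sum_mset G \<le> c + (T + 1)"
        using bound[OF \<open>sub_reachable n A R\<close>] \<open>x \<le> c\<close> by simp
      with G \<open>x \<le> c\<close> gap show ?thesis by auto
    qed
    ultimately show ?thesis using M' by blast
  qed
next
  case (subset M M')
  from subset.IH show ?case
  proof
    assume "\<exists>x R. M = add_mset x R \<and> sub_reachable n A R \<and> x \<le> c"
    then obtain x R where "M = add_mset x R" "sub_reachable n A R" "x \<le> c" by blast
    with subset.hyps(2) have "M' \<subseteq># add_mset x R" by simp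
    then show ?thesis
    proof (cases rule: subset_mset_add_mset_cases)
      case (2 y R')
      have "y \<le> c"
      proof (cases "y = x")
        case False
        with 2 obtain R'' where "R = add_mset y R''" by (metis multi_member_split)
        then show ?thesis using bound[OF \<open>sub_reachable n A R\<close>] \<open>T + 1 \<le> c\<close> by simp
      qed (use \<open>x \<le> c\<close> in simp)
      moreover have "sub_reachable n A R'"
        using \<open>sub_reachable n A R\<close> \<open>R' \<subseteq># R\<close> by (rule sub_reachable.subset)
      ultimately show ?thesis using \<open>M' = add_mset y R'\<close> by blast
    qed simp
  qed (use subset.hyps(2) in simp)
qed

lemma le_enumerate_if_less_enumerate_Suc:
  fixes A :: "nat set"
  assumes "infinite A" and "y \<in> A" and "y < enumerate A (Suc i)"
  shows "y \<le> enumerate A i"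
proof -
  obtain j where j: "enumerate A j = y" using enumerate_Ex[OF assms(1,2)] by blast
  with assms(3) have "enumerate A j < enumerate A (Suc i)" by simp
  then have "j \<le> i" by (simp only: enumerate_mono_iff[OF assms(1)] less_Suc_eq_le)
  then show ?thesis unfolding j[symmetric] by (simp only: enumerate_mono_le_iff[OF assms(1)])
qed

lemma unbounded_gaps_obtain_gap:
  fixes A :: "nat set"
  assumes "infinite A" and "\<forall>B. \<exists>i. enumerate A (Suc i) - enumerate A i > B"
  obtains c where "L \<le> c" "\<And>y. y \<in> A \<Longrightarrow> y \<le> c + K \<Longrightarrow> y \<le> c"
proof -
  obtain i where i: "enumerate A (Suc i) - enumerate A i > max K (enumerate A L)"
    using assms(2) by blast
  have "enumerate A L < enumerate A (Suc i)" using i by linarith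
  then have "L \<le> i" by (simp only: enumerate_mono_iff[OF assms(1)] less_Suc_eq_le)
  then have "L \<le> enumerate A i" using le_enumerate[OF assms(1), of i] by linarith
  moreover have "y \<le> enumerate A i" if "y \<in> A" "y \<le> enumerate A i + K" for y
  proof (rule le_enumerate_if_less_enumerate_Suc[OF assms(1) \<open>y \<in> A\<close>])
    show "y < enumerate A (Suc i)" using i that(2) by linarith
  qed
  ultimately show thesis by (rule that)
qed

lemma sub_reachable_sum_bounded:
  fixes A :: "nat set"
  assumes "infinite A" and "\<forall>B. \<exists>i. enumerate A (Suc i) - enumerate A i > B"
  shows "\<exists>T. \<forall>M. sub_reachable n A M \<longrightarrow> sum_mset M \<le> T"
proof (induction n)
  case 0
  show ?case by (metis sub_reachable_0 sum_mset.empty order_refl)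
next
  case (Suc n)
  then obtain T where T: "\<And>M. sub_reachable n A M \<Longrightarrow> sum_mset M \<le> T" by blast
  obtain c where c: "T + 1 \<le> c" and gap: "\<And>y. y \<in> A \<Longrightarrow> y \<le> c + (T + 1) \<Longrightarrow> y \<le> c"
    using unbounded_gaps_obtain_gap[OF assms] by blast
  have "sum_mset M \<le> c + T" if "sub_reachable (Suc n) A M" for M
    using sub_reachable_Suc_cases[OF that T c gap]
  proof
    assume "\<exists>x R. M = add_mset x R \<and> sub_reachable n A R \<and> x \<le> c"
    then obtain x R where "M = add_mset x R" "sub_reachable n A R" "x \<le> c" by blast
    then show ?thesis using T[of R] by simp
  qed auto
  then show ?case by blast
qed

lemma agg_step_place: "size M < n \<Longrightarrow> agg_step n A M (M + {#1#})"
  unfolding agg_step_def merge_step_def by (intro conjI exI[of _ "[]"] exI[of _ "M + {#1#}"]) simp_all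

lemma agg_step_place_merge_all:
  "size M < n \<Longrightarrow> sum_mset M + 1 \<in> A \<Longrightarrow> agg_step n A M {#sum_mset M + 1#}"
  unfolding agg_step_def merge_step_def
  by (intro conjI exI[of _ "[M + {#1#}]"] exI[of _ "{#}"]) simp_all

lemma agg_reachable_add_ones:
  assumes "agg_reachable n A M" and "size M + k \<le> n"
  shows "agg_reachable n A (M + replicate_mset k 1)"
  using assms(2)
proof (induction k)
  case 0
  then show ?case using assms(1) by simp
next
  case (Suc k)
  then have "agg_step n A (M + replicate_mset k 1) (M + replicate_mset k 1 + {#1#})"
    by (intro agg_step_place) simp
  with Suc show ?case by (auto intro: agg_reachable.step)
qed

lemma agg_reachable_single_add:
  assumes "agg_reachable n A {#x#}" and "0 < d" "d < n" "x + d \<in> A"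
  shows "agg_reachable n A {#x + d#}"
proof -
  let ?M = "add_mset x (replicate_mset (d - 1) 1)"
  have "agg_reachable n A ?M"
    using agg_reachable_add_ones[OF assms(1), of "d - 1"] assms(3) by simp
  moreover have "sum_mset ?M + 1 = x + d" using assms(2) by simp
  with assms have "agg_step n A ?M {#x + d#}"
    using agg_step_place_merge_all[of ?M n A] by simp
  ultimately show ?thesis by (rule agg_reachable.step)
qed

lemma Single_eq_infinity_if_bounded_gaps:
  fixes A :: "nat set"
  assumes "infinite A" and "1 \<in> A" and "0 \<notin> A"
    and bounded: "\<And>i. enumerate A (Suc i) - enumerate A i \<le> B"
  shows "Single (Suc B) A = \<infinity>"
proof -
  have "enumerate A 0 = 1"
    unfolding enumerate_0 using assms(2,3) by (metis Least_equality less_one not_le)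
  have reachable: "agg_reachable (Suc B) A {#enumerate A i#}" for i
  proof (induction i)
    case 0
    have "agg_step (Suc B) A {#} {#1#}" using agg_step_place[of "{#}"] by simp
    then show ?case
      using agg_reachable.step[OF agg_reachable.init] \<open>enumerate A 0 = 1\<close> by simp
  next
    case (Suc i)
    have "enumerate A i < enumerate A (Suc i)" using enumerate_step[OF assms(1)] by blast
    then show ?case
      using agg_reachable_single_add[OF Suc.IH, of "enumerate A (Suc i) - enumerate A i"]
        bounded[of i] enumerate_in_set[OF assms(1), of "Suc i"] by simp
  qed
  have "{x \<in> A. agg_reachable (Suc B) A {#x#}} = A"
    using reachable enumerate_Ex[OF assms(1)] by blast
  moreover have "infinite (enat ` A)"
    using assms(1) by (metis finite_imageD inj_on_def enat.inject)
  ultimately show ?thesis unfolding Single_def using assms(2) by (auto simp: Sup_enat_def)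
qed

lemma Sup_enat_image_bounded:
  "(\<And>x. x \<in> S \<Longrightarrow> f x \<le> T) \<Longrightarrow> Sup ((\<lambda>x. enat (f x)) ` S) \<noteq> \<infinity>"
  by (metis (mono_tags, lifting) Sup_least enat_ord_simps(1) imageE infinity_ileE)

lemma Single_Total_finite_if_unbounded_gaps:
  fixes A :: "nat set"
  assumes "infinite A" and "\<forall>B. \<exists>i. enumerate A (Suc i) - enumerate A i > B"
  shows "Single n A \<noteq> \<infinity> \<and> Total n A \<noteq> \<infinity>"
proof -
  obtain T where "\<And>M. agg_reachable n A M \<Longrightarrow> sum_mset M \<le> T"
    using sub_reachable_sum_bounded[OF assms, of n] agg_reachable_imp_sub_reachable by blast
  then show ?thesis
    unfolding Single_def Total_def by (intro conjI Sup_enat_image_bounded[where T = T]) force+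
qed

theorem mainTheorem8:
  fixes A :: "nat set"
  assumes "infinite A" and "1 \<in> A" and "0 \<notin> A"
  shows "(\<forall>n \<ge> 1. Single n A \<noteq> \<infinity> \<and> Total n A \<noteq> \<infinity>) \<longleftrightarrow>
         (\<forall>B. \<exists>i. enumerate A (Suc i) - enumerate A i > B)"
proof
  assume finite: "\<forall>n \<ge> 1. Single n A \<noteq> \<infinity> \<and> Total n A \<noteq> \<infinity>"
  show "\<forall>B. \<exists>i. enumerate A (Suc i) - enumerate A i > B"
  proof (rule ccontr)
    assume "\<not> (\<forall>B. \<exists>i. enumerate A (Suc i) - enumerate A i > B)"
    then obtain B where "\<And>i. enumerate A (Suc i) - enumerate A i \<le> B" by (auto simp: not_less)
    from Single_eq_infinity_if_bounded_gaps[OF assms this] finite show False by auto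
  qed
next
  assume "\<forall>B. \<exists>i. enumerate A (Suc i) - enumerate A i > B"
  then show "\<forall>n \<ge> 1. Single n A \<noteq> \<infinity> \<and> Total n A \<noteq> \<infinity>"
    using Single_Total_finite_if_unbounded_gaps[OF assms(1)] by blast
qed

end
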